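(* Let $G=(V,E)$ be a finite undirected graph without multi-edges and self-loops, with $N=|V|\ge 1$. Suppose that $G$ is removed completely by the leaf-removal algorithm, and let $C\subseteq V$ be the set of vertices covered by the algorithm. Then the linear-programming relaxation $$\min\ \frac{1}{N}\sum_{i\in V}x_i \quad\text{subject to}\quad x_i+x_j\ge 1\ \ \forall (i,j)\in E,\qquad x_i\in[0,1]\ \ \forall i\in V$$ has an optimal solution, and its optimal value equals $|C|/N$, the value obtained by the leaf-removal algorithm.
   Context: The minimum vertex cover problem on $G$ is the integer program: minimize $\frac1N\sum_{i\in V}x_i$ subject to $x_i+x_j\ge 1$ for all $(i,j)\in E$ and $x_i\in\{0,1\}$ for all $i\in V$. Its linear-programming (LP) relaxation replaces $x_i\in\{0,1\}$ by $x_i\in[0,1]$. A leaf is a vertex of degree one. The leaf-removal algorithm works as follows: as long as the current graph contains a leaf $w$, let $v$ be the unique neighbor of $w$; cover $v$ (add it to $C$) and delete $v$ together with all its incident edges from the current graph. The algorithm stops when the remaining graph has no leaf; if edges then remain, all vertices of the remaining non-trivial connected components (the leaf-removal core) are also covered. The graph $G$ is said to be removed completely by leaf removal if, when the algorithm stops, the remaining graph has no edges (the leaf-removal core is empty), so that $C$ consists exactly of the vertices covered during the leaf-removal steps. *)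

theory Defs
  imports Complex_Main
begin

definition simple_graph :: "'a set \<Rightarrow> 'a set set \<Rightarrow> bool" where
  "simple_graph V E \<longleftrightarrow> finite V \<and>
     (\<forall>e\<in>E. \<exists>i j. e = {i, j} \<and> i \<noteq> j \<and> i \<in> V \<and> j \<in> V)"

definition is_leaf :: "'a set set \<Rightarrow> 'a \<Rightarrow> bool" where
  "is_leaf F w \<longleftrightarrow> card {e\<in>F. w \<in> e} = 1"

text \<open>Runs of the leaf-removal algorithm: lr_run F C F' C' means that starting
  from current edge set F and covered set C, a sequence of leaf-removal steps
  reaches edge set F' and covered set C'.\<close>
inductive lr_run :: "'a set set \<Rightarrow> 'a set \<Rightarrow> 'a set set \<Rightarrow> 'a set \<Rightarrow> bool" where
  lr_refl: "lr_run F C F C"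
| lr_step: "is_leaf F w \<Longrightarrow> {w, v} \<in> F \<Longrightarrow>
            lr_run (F - {e. v \<in> e}) (insert v C) F' C' \<Longrightarrow> lr_run F C F' C'"

definition removed_completely_with :: "'a set set \<Rightarrow> 'a set \<Rightarrow> bool" where
  "removed_completely_with E C \<longleftrightarrow>
     (\<exists>F. lr_run E {} F C \<and> (\<forall>w. \<not> is_leaf F w) \<and> F = {})"

definition lp_feasible :: "'a set \<Rightarrow> 'a set set \<Rightarrow> ('a \<Rightarrow> real) \<Rightarrow> bool" where
  "lp_feasible V E x \<longleftrightarrow> (\<forall>i\<in>V. 0 \<le> x i \<and> x i \<le> 1) \<and>
     (\<forall>i j. {i, j} \<in> E \<longrightarrow> x i + x j \<ge> 1)"

definition lp_objective :: "'a set \<Rightarrow> ('a \<Rightarrow> real) \<Rightarrow> real" where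
  "lp_objective V x = (1 / real (card V)) * (\<Sum>i\<in>V. x i)"

end

theory Submission
  imports Defs
begin

text \<open>Each leaf-removal step covers the neighbour v of a leaf w and can be charged to the edge
  {w, v}. These edges form a matching: later edges avoid v, which has been deleted, and avoid w,
  whose only edge was {w, v}. So the covered set C is a vertex cover carrying a matching of
  size |C|. The indicator of C is LP-feasible with value |C|/N, while every feasible x has
  x_i + x_j \<ge> 1 on each of the |C| disjoint matching edges, hence objective at least |C|/N.\<close>

lemma is_leaf_edge_unique:
  assumes "is_leaf F w" and "{w, v} \<in> F" and "e \<in> F" and "w \<in> e"
  shows "e = {w, v}"
proof -
  obtain a where a: "{e\<in>F. w \<in> e} = {a}"
    using assms(1) unfolding is_leaf_def by (rule card_1_singletonE)
  have "e \<in> {e\<in>F. w \<in> e}" "{w, v} \<in> {e\<in>F. w \<in> e}" using assms(2-4) by auto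
  then show ?thesis unfolding a by simp
qed

lemma lr_run_covered_mono: "lr_run F C F' C' \<Longrightarrow> C \<subseteq> C'"
  by (induction rule: lr_run.induct) auto

lemma lr_run_covered_subset: "lr_run F C F' C' \<Longrightarrow> C' \<subseteq> C \<union> \<Union>F"
  by (induction rule: lr_run.induct) blast+

lemma lr_run_finite_covered: "lr_run F C F' C' \<Longrightarrow> finite (C' - C)"
proof (induction rule: lr_run.induct)
  case (lr_step F w v C F' C')
  have "C' - C \<subseteq> insert v (C' - insert v C)" by blast
  with lr_step.IH show ?case by (meson finite_insert finite_subset)
qed simp

lemma lr_run_covers_removed_edges:
  "lr_run F C F' C' \<Longrightarrow> e \<in> F - F' \<Longrightarrow> e \<inter> C' \<noteq> {}"
proof (induction arbitrary: e rule: lr_run.induct)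
  case (lr_step F w v C F' C')
  show ?case
  proof (cases "v \<in> e")
    case True
    then show ?thesis using lr_run_covered_mono[OF lr_step.hyps(3)] by blast
  next
    case False
    then show ?thesis using lr_step.IH lr_step.prems by blast
  qed
qed simp

lemma lr_run_matching:
  assumes "lr_run F C F' C'"
  shows "\<exists>M\<subseteq>F. pairwise disjnt M \<and> finite M \<and> card M = card (C' - C)"
  using assms
proof (induction rule: lr_run.induct)
  case (lr_refl F C)
  show ?case by (intro exI[of _ "{}"]) auto
next
  case (lr_step F w v C F' C')
  from lr_step.IH obtain M where M: "M \<subseteq> F - {e. v \<in> e}" "pairwise disjnt M" "finite M"
    and card_M: "card M = card (C' - insert v C)"
    by blast
  have "M \<subseteq> F" using M(1) by blast
  show ?case
  proof (cases "v \<in> C")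
    case True
    then have "C' - insert v C = C' - C" by blast
    then show ?thesis using \<open>M \<subseteq> F\<close> M(2,3) card_M by (intro exI[of _ M]) simp
  next
    case False
    have avoid: "disjnt {w, v} e" if "e \<in> M" for e
    proof -
      have "e \<in> F" "v \<notin> e" using that M(1) by auto
      then have "w \<notin> e" using is_leaf_edge_unique[OF lr_step.hyps(1,2)] by blast
      with \<open>v \<notin> e\<close> show ?thesis by (simp add: disjnt_def)
    qed
    have "{w, v} \<notin> M" using M(1) by blast
    then have "card (insert {w, v} M) = Suc (card (C' - insert v C))"
      using M(3) card_M by simp
    also have "\<dots> = card (C' - C)"
    proof -
      have "insert v C \<subseteq> C'" using lr_run_covered_mono[OF lr_step.hyps(3)] .
      then have "C' - C = insert v (C' - insert v C)" using False by blast
      then have "card (C' - C) = card (insert v (C' - insert v C))" by (rule arg_cong)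
      then show ?thesis using lr_run_finite_covered[OF lr_step.hyps(3)] by simp
    qed
    finally have "card (insert {w, v} M) = card (C' - C)" .
    moreover have "pairwise disjnt (insert {w, v} M)"
      using M(2) avoid by (auto simp: pairwise_insert intro: disjnt_sym)
    ultimately show ?thesis
      using \<open>M \<subseteq> F\<close> M(3) lr_step.hyps(2) by (intro exI[of _ "insert {w, v} M"]) simp
  qed
qed

lemma lp_feasible_cover_indicator:
  assumes "\<forall>e\<in>E. e \<inter> S \<noteq> {}"
  shows "lp_feasible V E (\<lambda>i. of_bool (i \<in> S))"
  using assms unfolding lp_feasible_def by fastforce

lemma lp_objective_indicator:
  assumes "finite V" and "S \<subseteq> V"
  shows "lp_objective V (\<lambda>i. of_bool (i \<in> S)) = real (card S) / real (card V)"
proof -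
  have "V \<inter> {i. i \<in> S} = S" using assms(2) by blast
  then show ?thesis using assms(1) by (simp add: lp_objective_def)
qed

lemma lp_objective_ge_matching:
  assumes "simple_graph V E" and "lp_feasible V E y"
    and "M \<subseteq> E" and "pairwise disjnt M"
  shows "real (card M) / real (card V) \<le> lp_objective V y"
proof -
  have fin_V: "finite V" using assms(1) by (simp add: simple_graph_def)
  have edge: "\<exists>i j. e = {i, j} \<and> i \<noteq> j \<and> i \<in> V \<and> j \<in> V" if "e \<in> M" for e
    using that assms(1,3) by (auto simp: simple_graph_def)
  have "M \<subseteq> Pow V" using edge by blast
  then have fin_M: "finite M" using fin_V by (meson finite_Pow_iff finite_subset)
  have "real (card M) = (\<Sum>e\<in>M. 1)" by simp
  also have "\<dots> \<le> (\<Sum>e\<in>M. \<Sum>i\<in>e. y i)"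
  proof (rule sum_mono)
    fix e assume "e \<in> M"
    with edge obtain i j where "e = {i, j}" "i \<noteq> j" by blast
    then show "1 \<le> (\<Sum>i\<in>e. y i)"
      using \<open>e \<in> M\<close> assms(2,3) by (auto simp: lp_feasible_def)
  qed
  also have "\<dots> = (\<Sum>i\<in>\<Union>M. y i)"
    using assms(4) edge by (subst sum.Union_disjoint) (auto simp: pairwise_def disjnt_def)
  also have "\<dots> \<le> (\<Sum>i\<in>V. y i)"
    using \<open>M \<subseteq> Pow V\<close> fin_V assms(2) by (intro sum_mono2) (auto simp: lp_feasible_def)
  finally have "real (card M) \<le> (\<Sum>i\<in>V. y i)" .
  from divide_right_mono[OF this, of "real (card V)"] show ?thesis
    by (simp add: lp_objective_def)
qed

theorem theorem1:
  fixes V :: "'a set" and E :: "'a set set" and C :: "'a set"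
  assumes "simple_graph V E"
    and "card V \<ge> 1"
    and "removed_completely_with E C"
  shows "\<exists>x. lp_feasible V E x \<and>
           (\<forall>y. lp_feasible V E y \<longrightarrow> lp_objective V x \<le> lp_objective V y) \<and>
           lp_objective V x = real (card C) / real (card V)"
proof -
  have run: "lr_run E {} {} C"
    using assms(3) by (simp add: removed_completely_with_def)
  have cover: "\<forall>e\<in>E. e \<inter> C \<noteq> {}"
    using lr_run_covers_removed_edges[OF run] by blast
  obtain M where M: "M \<subseteq> E" "pairwise disjnt M" "card M = card C"
    using lr_run_matching[OF run] by auto
  have "C \<subseteq> V"
    using lr_run_covered_subset[OF run] assms(1) by (fastforce simp: simple_graph_def)
  then have objective_C: "lp_objective V (\<lambda>i. of_bool (i \<in> C)) = real (card C) / real (card V)"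
    using assms(1) by (simp add: lp_objective_indicator simple_graph_def)
  show ?thesis
  proof (intro exI[of _ "\<lambda>i. of_bool (i \<in> C)"] conjI allI impI)
    show "lp_feasible V E (\<lambda>i. of_bool (i \<in> C))"
      using cover by (rule lp_feasible_cover_indicator)
    fix y assume "lp_feasible V E y"
    from lp_objective_ge_matching[OF assms(1) this M(1,2)]
    show "lp_objective V (\<lambda>i. of_bool (i \<in> C)) \<le> lp_objective V y"
      unfolding objective_C M(3) .
  qed (rule objective_C)
qed

end
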